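(* The generalized $\mathbb Z^d$ beach model satisfies condition $\mho$. That is: let $A=A_0\uplus A_1$ and $B$ be finite sets with $A_0\neq\emptyset$, let $S=A\times B$, write $s=(\alpha(s),\beta(s))$, and let $X=\{x\in S^{\mathbb Z^d}:\forall n\in\mathbb Z^d,\ 1\le i\le d,\ (\alpha(x_n)\in A_0\text{ and }\alpha(x_{n+e_i})\in A_0)\text{ or }\beta(x_n)=\beta(x_{n+e_i})\}$. Then there is a finite $F\subset\mathbb Z^d$ such that for every $a\in X_F$ the subgroup of $\mathbb Z^S$ generated by $\{\Psi_\sharp(a,b):b\in X_F,\ a_{\partial F}=b_{\partial F}\}$ equals $\mathbb H_{X,\sharp}$.
   Context: $e_1,\dots,e_d$ are the standard unit vectors of $\mathbb Z^d$. Notation: $\|n\|=\max_k|n_k|$, $B(n,r)=\{k:\|k-n\|\le r\}$, $F^o=\{x\in F:B(x,1)\subset F\}$, $\partial F=F\setminus F^o$; $x_\Lambda$ restriction, $X_\Lambda=\{x_\Lambda:x\in X\}$. Tail relation $\mathfrak T(X)=\{(x,y)\in X^2:\exists F\text{ finite},x_{F^c}=y_{F^c}\}$. $\sharp:S\to\mathbb Z^S$, $\sharp(s)=e_s$ (standard basis vector of $\mathbb Z^S$); $\Psi_\sharp(x,y)=\sum_j(e_{y_j}-e_{x_j})$ on $\mathfrak T(X)$; for finite $F$ and $a,b\in X_F$, $\Psi_\sharp(a,b)=\sum_{j\in F}(e_{b_j}-e_{a_j})$; $\mathbb H_{X,\sharp}$ is the subgroup generated by $\{\Psi_\sharp(x,y):(x,y)\in\mathfrak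 T(X)\}$. *)

theory Defs
  imports Main "HOL-Library.Function_Algebras" "HOL-Computational_Algebra.Group_Closure"
begin

text \<open>Points of Z^d are functions 'd => int, where 'd is a finite index type with CARD('d) = d.\<close>

definition unitvec :: "'d \<Rightarrow> ('d \<Rightarrow> int)" where
  "unitvec i = (\<lambda>j. if j = i then 1 else 0)"

definition supnorm :: "('d::finite \<Rightarrow> int) \<Rightarrow> int" where
  "supnorm n = Max (range (\<lambda>k. \<bar>n k\<bar>))"

definition nball :: "('d::finite \<Rightarrow> int) \<Rightarrow> int \<Rightarrow> ('d \<Rightarrow> int) set" where
  "nball n r = {k. supnorm (k - n) \<le> r}"

definition interior_set :: "('d::finite \<Rightarrow> int) set \<Rightarrow> ('d \<Rightarrow> int) set" where
  "interior_set F = {x \<in> F. nball x 1 \<subseteq> F}"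

definition bdry :: "('d::finite \<Rightarrow> int) set \<Rightarrow> ('d \<Rightarrow> int) set" where
  "bdry F = F - interior_set F"

text \<open>Restriction x_Lambda (undefined outside Lambda) and the set X_Lambda.\<close>
definition restr :: "('n \<Rightarrow> 's) \<Rightarrow> 'n set \<Rightarrow> ('n \<Rightarrow> 's)" where
  "restr x L = (\<lambda>n. if n \<in> L then x n else undefined)"

definition patterns :: "('n \<Rightarrow> 's) set \<Rightarrow> 'n set \<Rightarrow> ('n \<Rightarrow> 's) set" where
  "patterns X L = (\<lambda>x. restr x L) ` X"

definition tail_rel :: "('n \<Rightarrow> 's) set \<Rightarrow> (('n \<Rightarrow> 's) \<times> ('n \<Rightarrow> 's)) set" where
  "tail_rel X = {(x, y). x \<in> X \<and> y \<in> X \<and> (\<exists>F. finite F \<and> (\<forall>n. n \<notin> F \<longrightarrow> x n = y n))}"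

definition sharp :: "'s \<Rightarrow> ('s \<Rightarrow> int)" where
  "sharp s = (\<lambda>t. if t = s then 1 else 0)"

definition Psi_pat :: "'n set \<Rightarrow> ('n \<Rightarrow> 's) \<Rightarrow> ('n \<Rightarrow> 's) \<Rightarrow> ('s \<Rightarrow> int)" where
  "Psi_pat F a b = (\<Sum>j\<in>F. sharp (b j) - sharp (a j))"

definition Psi :: "('n \<Rightarrow> 's) \<Rightarrow> ('n \<Rightarrow> 's) \<Rightarrow> ('s \<Rightarrow> int)" where
  "Psi x y = (\<Sum>j\<in>{j. x j \<noteq> y j}. sharp (y j) - sharp (x j))"

definition H_group :: "('n \<Rightarrow> 's) set \<Rightarrow> ('s \<Rightarrow> int) set" where
  "H_group X = group_closure {Psi x y | x y. (x, y) \<in> tail_rel X}"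

definition beach :: "'a set \<Rightarrow> 'a set \<Rightarrow> 'b set \<Rightarrow> (('d::finite \<Rightarrow> int) \<Rightarrow> 'a \<times> 'b) set" where
  "beach A A0 B = {x. (\<forall>n. x n \<in> A \<times> B) \<and>
     (\<forall>n i. (fst (x n) \<in> A0 \<and> fst (x (n + unitvec i)) \<in> A0) \<or> snd (x n) = snd (x (n + unitvec i)))}"

end

theory Submission
  imports Defs "HOL-Library.FuncSet"
begin

text \<open>Take for F the sup-norm ball of radius 3 and fix a configuration x extending a.
  Every local move b at a glues into x, because the beach constraint is nearest-neighbour and b
  agrees with a on \<open>\<partial>F\<close>; so the local moves generate a subgroup of \<open>\<bbbH>\<close>. Conversely \<open>\<bbbH>\<close> is
  generated by the differences \<open>e\<^sub>s - e\<^sub>t\<close>. Fix \<open>a\<^sub>0 \<in> A\<^sub>0\<close> and \<open>b\<^sub>0 \<in> B\<close>. For every s with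
  \<open>\<alpha>(s) \<in> A\<^sub>0\<close> or \<open>\<beta>(s) = b\<^sub>0\<close>, changing x inside the ball of radius 2 to s at the origin,
  \<open>(a\<^sub>0, b\<^sub>0)\<close> on the sphere of radius 1 and \<open>(a\<^sub>0, \<beta>(x\<^sub>n))\<close> on the sphere of radius 2 gives
  again a point of X. Two such modifications differ only at the origin, so \<open>e\<^sub>s - e\<^sub>t\<close> is a
  difference of two local moves whenever s and t are both compatible with \<open>b\<^sub>0\<close>, and the chain
  \<open>s \<rightarrow> (a\<^sub>0, \<beta>(s)) \<rightarrow> (a\<^sub>0, \<beta>(t)) \<rightarrow> t\<close> yields every \<open>e\<^sub>s - e\<^sub>t\<close>.\<close>

lemma group_closure_minimal:
  fixes S T :: "'x::ab_group_add set"
  assumes "S \<subseteq> group_closure T"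
  shows "group_closure S \<subseteq> group_closure T"
proof
  fix s assume "s \<in> group_closure S"
  then show "s \<in> group_closure T"
    by induction (use assms in \<open>auto intro: group_closure.diff\<close>)
qed

lemma sum_in_group_closure:
  fixes f :: "'i \<Rightarrow> 'x::ab_group_add"
  assumes "\<And>j. j \<in> D \<Longrightarrow> f j \<in> group_closure T"
  shows "sum f D \<in> group_closure T"
  using assms by (induction D rule: infinite_finite_induct) (auto intro: group_closure_add)

lemma abs_le_supnorm: "\<bar>n i\<bar> \<le> supnorm (n::'d::finite \<Rightarrow> int)"
  unfolding supnorm_def by (rule Max_ge) auto

lemma supnorm_le_iff: "supnorm (n::'d::finite \<Rightarrow> int) \<le> r \<longleftrightarrow> (\<forall>i. \<bar>n i\<bar> \<le> r)"
  unfolding supnorm_def by (subst Max_le_iff) auto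

lemma supnorm_nonneg: "0 \<le> supnorm (n::'d::finite \<Rightarrow> int)"
  using abs_le_supnorm[of n undefined] by linarith

lemma supnorm_eq_0_iff: "supnorm n = 0 \<longleftrightarrow> n = (0::'d::finite \<Rightarrow> int)"
  using supnorm_le_iff[of n 0] supnorm_nonneg[of n] by (auto simp: fun_eq_iff)

lemma supnorm_zero [simp]: "supnorm (0::'d::finite \<Rightarrow> int) = 0"
  by (simp add: supnorm_eq_0_iff)

lemma supnorm_uminus: "supnorm (- n) = supnorm (n::'d::finite \<Rightarrow> int)"
  by (simp add: supnorm_def)

lemma supnorm_triangle: "supnorm (m + n) \<le> supnorm m + supnorm (n::'d::finite \<Rightarrow> int)"
  unfolding supnorm_le_iff
  by (metis abs_le_supnorm abs_triangle_ineq add_mono order_trans plus_fun_apply)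

lemma supnorm_unitvec: "supnorm (unitvec i :: 'd::finite \<Rightarrow> int) = 1"
  using abs_le_supnorm[of "unitvec i" i] by (simp add: supnorm_le_iff unitvec_def antisym)

lemma supnorm_add_unitvec: "\<bar>supnorm (n + unitvec i) - supnorm (n::'d::finite \<Rightarrow> int)\<bar> \<le> 1"
  using supnorm_triangle[of n "unitvec i"] supnorm_triangle[of "n + unitvec i" "- unitvec i"]
  by (simp add: supnorm_uminus supnorm_unitvec)

lemma add_unitvec_neq: "n + unitvec i \<noteq> (n::'d \<Rightarrow> int)"
  by (auto simp: fun_eq_iff unitvec_def)

lemma finite_supnorm_le: "finite {k::'d::finite \<Rightarrow> int. supnorm k \<le> r}"
proof (rule finite_subset)
  show "{k::'d \<Rightarrow> int. supnorm k \<le> r} \<subseteq> PiE UNIV (\<lambda>_. {-r..r})"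
    by (auto simp: supnorm_le_iff abs_le_iff PiE_iff) (metis minus_le_iff)
qed (rule finite_PiE, auto)

lemma interior_supnorm_ball:
  assumes "supnorm n \<le> r"
  shows "n \<in> interior_set {k::'d::finite \<Rightarrow> int. supnorm k \<le> r + 1}"
proof -
  have "supnorm k \<le> r + 1" if "supnorm (k - n) \<le> 1" for k
    using supnorm_triangle[of "k - n" n] that assms by simp
  then show ?thesis using assms by (auto simp: interior_set_def nball_def)
qed

lemma bdry_if_neighbour_outside:
  assumes "n \<in> F" and "n + unitvec i \<notin> F \<or> n - unitvec i \<notin> F"
  shows "n \<in> bdry (F::('d::finite \<Rightarrow> int) set)"
proof -
  have "n + unitvec i \<in> nball n 1" "n - unitvec i \<in> nball n 1"
    by (simp_all add: nball_def supnorm_unitvec supnorm_uminus)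
  then show ?thesis using assms by (auto simp: bdry_def interior_set_def)
qed

definition beach_adj :: "'a set \<Rightarrow> 'a \<times> 'b \<Rightarrow> 'a \<times> 'b \<Rightarrow> bool" where
  "beach_adj A0 u v \<longleftrightarrow> (fst u \<in> A0 \<and> fst v \<in> A0) \<or> snd u = snd v"

lemma beach_adj_sym: "beach_adj A0 u v \<longleftrightarrow> beach_adj A0 v u"
  by (auto simp: beach_adj_def)

lemma mem_beach_iff:
  "x \<in> beach A A0 B \<longleftrightarrow> (\<forall>n. x n \<in> A \<times> B) \<and> (\<forall>n i. beach_adj A0 (x n) (x (n + unitvec i)))"
  by (simp add: beach_def beach_adj_def)

lemma beach_glue:
  fixes x y :: "('d::finite \<Rightarrow> int) \<Rightarrow> 'a \<times> 'b"
  assumes x: "x \<in> beach A A0 B" and y: "y \<in> beach A A0 B"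
    and bdry_eq: "\<And>n. n \<in> bdry F \<Longrightarrow> x n = y n"
  shows "(\<lambda>n. if n \<in> F then y n else x n) \<in> beach A A0 B"
proof -
  have "beach_adj A0 (if n \<in> F then y n else x n) (if m \<in> F then y m else x m)"
    if m: "m = n + unitvec i" for n m i
  proof -
    have "beach_adj A0 (x n) (x m)" "beach_adj A0 (y n) (y m)"
      using x y m by (simp_all add: mem_beach_iff)
    moreover have "x n = y n" if "n \<in> F" "m \<notin> F"
      using that m by (intro bdry_eq bdry_if_neighbour_outside) auto
    moreover have "x m = y m" if "n \<notin> F" "m \<in> F"
      using that m bdry_if_neighbour_outside[of m F i] by (intro bdry_eq) auto
    ultimately show ?thesis by auto
  qed
  then show ?thesis using x y by (simp add: mem_beach_iff)
qed

lemma Psi_eq_sum: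
  assumes "finite F" and "{j. x j \<noteq> y j} \<subseteq> F"
  shows "Psi x y = (\<Sum>j\<in>F. sharp (y j) - sharp (x j))"
  unfolding Psi_def using assms by (intro sum.mono_neutral_left) auto

lemma Psi_pat_restr: "Psi_pat F (restr x F) (restr y F) = (\<Sum>j\<in>F. sharp (y j) - sharp (x j))"
  unfolding Psi_pat_def restr_def by simp

lemma Psi_in_H_group: "(x, y) \<in> tail_rel X \<Longrightarrow> Psi x y \<in> H_group X"
  unfolding H_group_def by (blast intro: group_closure.base)

lemma H_group_subset_sharp_diffs:
  assumes "\<And>x n. x \<in> X \<Longrightarrow> x n \<in> V"
  shows "H_group X \<subseteq> group_closure {sharp s - sharp t | s t. s \<in> V \<and> t \<in> V}"
  unfolding H_group_def
proof (rule group_closure_minimal, safe)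
  fix x y assume "(x, y) \<in> tail_rel X"
  then have "x \<in> X" "y \<in> X" by (auto simp: tail_rel_def)
  then show "Psi x y \<in> group_closure {sharp s - sharp t | s t. s \<in> V \<and> t \<in> V}"
    unfolding Psi_def using assms by (intro sum_in_group_closure group_closure.base) blast
qed

definition local_group ::
    "(('d::finite \<Rightarrow> int) \<Rightarrow> 's) set \<Rightarrow> ('d \<Rightarrow> int) set \<Rightarrow> (('d \<Rightarrow> int) \<Rightarrow> 's) \<Rightarrow> ('s \<Rightarrow> int) set"
  where "local_group X F a =
    group_closure {Psi_pat F a b | b. b \<in> patterns X F \<and> (\<forall>n \<in> bdry F. a n = b n)}"

lemma local_group_subset_H_group:
  fixes x :: "('d::finite \<Rightarrow> int) \<Rightarrow> 'a \<times> 'b"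
  assumes F: "finite F" and x: "x \<in> beach A A0 B"
  shows "local_group (beach A A0 B) F (restr x F)
    \<subseteq> H_group (beach A A0 B :: (('d \<Rightarrow> int) \<Rightarrow> 'a \<times> 'b) set)" (is "_ \<subseteq> ?H")
proof -
  have "Psi_pat F (restr x F) b \<in> ?H"
    if b: "b \<in> patterns (beach A A0 B) F" and bdry_eq: "\<forall>n \<in> bdry F. restr x F n = b n" for b
  proof -
    obtain y where y: "y \<in> beach A A0 B" "b = restr y F" using b by (auto simp: patterns_def)
    define z where "z n = (if n \<in> F then y n else x n)" for n
    have "z \<in> beach A A0 B"
      unfolding z_def using x y bdry_eq by (intro beach_glue) (auto simp: restr_def bdry_def)
    moreover have diff: "{j. x j \<noteq> z j} \<subseteq> F" by (auto simp: z_def)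
    ultimately have "(x, z) \<in> tail_rel (beach A A0 B)" using x F by (auto simp: tail_rel_def)
    then have "Psi x z \<in> ?H" by (rule Psi_in_H_group)
    also have "Psi x z = Psi_pat F (restr x F) b"
      by (simp add: Psi_eq_sum[OF F diff] Psi_pat_restr y(2) z_def)
    finally show ?thesis .
  qed
  then show ?thesis unfolding local_group_def H_group_def
    by (intro group_closure_minimal) auto
qed

definition beach_plant ::
    "'a \<Rightarrow> 'b \<Rightarrow> 'a \<times> 'b \<Rightarrow> (('d::finite \<Rightarrow> int) \<Rightarrow> 'a \<times> 'b) \<Rightarrow> ('d \<Rightarrow> int) \<Rightarrow> 'a \<times> 'b"
  where "beach_plant a0 b0 s x n =
    (if n = 0 then s
     else if supnorm n \<le> 1 then (a0, b0)
     else if supnorm n \<le> 2 then (a0, snd (x n))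
     else x n)"

lemma beach_plant_in_beach:
  assumes x: "x \<in> beach A A0 B" and A0: "A0 \<subseteq> A" "a0 \<in> A0" and b0: "b0 \<in> B"
    and s: "s \<in> A \<times> B" "beach_adj A0 s (a0, b0)"
  shows "beach_plant a0 b0 s x \<in> beach A A0 B"
proof -
  let ?y = "beach_plant a0 b0 s x"
  have "?y n \<in> A \<times> B" for n
    using x A0 b0 s by (auto simp: beach_plant_def mem_beach_iff mem_Times_iff)
  moreover have "beach_adj A0 (?y n) (?y m)" if m: "m = n + unitvec i" for n m i
  proof -
    have inner: "fst (?y k) \<in> A0" if "0 < supnorm k" "supnorm k \<le> 2" for k
      using that A0 by (auto simp: beach_plant_def)
    have outer: "snd (?y k) = snd (x k) \<and> (fst (x k) \<in> A0 \<longrightarrow> fst (?y k) \<in> A0)"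
      if "2 \<le> supnorm k" for k
      using that A0 supnorm_eq_0_iff[of k] by (auto simp: beach_plant_def)
    have centre: "?y 0 = s" and sphere1: "?y k = (a0, b0)" if "0 < supnorm k" "supnorm k \<le> 1" for k
      using that supnorm_eq_0_iff[of k] by (auto simp: beach_plant_def)
    have "\<bar>supnorm m - supnorm n\<bar> \<le> 1" "m \<noteq> n"
      using supnorm_add_unitvec[of n i] add_unitvec_neq[of n i] by (simp_all add: m)
    then consider "2 \<le> supnorm n" "2 \<le> supnorm m"
      | "0 < supnorm n" "supnorm n \<le> 2" "0 < supnorm m" "supnorm m \<le> 2"
      | "n = 0" "0 < supnorm m" "supnorm m \<le> 1"
      | "m = 0" "0 < supnorm n" "supnorm n \<le> 1"
      using supnorm_eq_0_iff[of n] supnorm_eq_0_iff[of m] supnorm_nonneg[of n] supnorm_nonneg[of m]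
      by fastforce
    then show ?thesis
    proof cases
      case 1
      with outer have "beach_adj A0 (x n) (x m) \<Longrightarrow> beach_adj A0 (?y n) (?y m)"
        by (auto simp: beach_adj_def)
      then show ?thesis using x m by (simp add: mem_beach_iff)
    next
      case 2
      then show ?thesis using inner by (simp add: beach_adj_def)
    next
      case 3
      then show ?thesis using centre sphere1 s(2) by simp
    next
      case 4
      then show ?thesis using centre sphere1 s(2) by (simp add: beach_adj_sym)
    qed
  qed
  ultimately show ?thesis by (simp add: mem_beach_iff)
qed

lemma sharp_diff_planted_in_local_group:
  fixes x :: "('d::finite \<Rightarrow> int) \<Rightarrow> 'a \<times> 'b"
  assumes F: "finite F" "{k. supnorm k \<le> 2} \<subseteq> interior_set F"
    and x: "x \<in> beach A A0 B" and A0: "A0 \<subseteq> A" "a0 \<in> A0" and b0: "b0 \<in> B"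
    and s: "s \<in> A \<times> B" "beach_adj A0 s (a0, b0)" and t: "t \<in> A \<times> B" "beach_adj A0 t (a0, b0)"
  shows "sharp s - sharp t \<in> local_group (beach A A0 B) F (restr x F)"
proof -
  let ?G = "local_group (beach A A0 B) F (restr x F)"
  let ?move = "\<lambda>u. Psi_pat F (restr x F) (restr (beach_plant a0 b0 u x) F)"
  have move: "?move u \<in> ?G" if u: "u \<in> A \<times> B" "beach_adj A0 u (a0, b0)" for u
  proof -
    have "beach_plant a0 b0 u x n = x n" if "n \<in> bdry F" for n
      using that F(2) supnorm_eq_0_iff[of n] by (force simp: bdry_def beach_plant_def)
    moreover have "restr (beach_plant a0 b0 u x) F \<in> patterns (beach A A0 B) F"
      using beach_plant_in_beach[OF x A0 b0 u] by (simp add: patterns_def)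
    ultimately show ?thesis
      unfolding local_group_def by (intro group_closure.base) (auto simp: restr_def bdry_def)
  qed
  have "0 \<in> F" using subsetD[OF F(2), of 0] by (simp add: interior_set_def)
  have "?move s - ?move t \<in> ?G"
    using move[OF s] move[OF t] unfolding local_group_def by (rule group_closure.diff)
  also have "?move s - ?move t
      = (\<Sum>j\<in>F. sharp (beach_plant a0 b0 s x j) - sharp (beach_plant a0 b0 t x j))"
    by (simp add: Psi_pat_restr flip: sum_subtractf)
  also have "\<dots> = (\<Sum>j\<in>F. if j = 0 then sharp s - sharp t else 0)"
    by (rule sum.cong) (auto simp: beach_plant_def)
  also have "\<dots> = sharp s - sharp t" using F(1) \<open>0 \<in> F\<close> by simp
  finally show ?thesis .
qed

lemma sharp_diff_in_local_group:
  fixes x :: "('d::finite \<Rightarrow> int) \<Rightarrow> 'a \<times> 'b"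
  assumes F: "finite F" "{k. supnorm k \<le> 2} \<subseteq> interior_set F"
    and x: "x \<in> beach A A0 B" and A0: "A0 \<subseteq> A" "A0 \<noteq> {}"
    and s: "s \<in> A \<times> B" and t: "t \<in> A \<times> B"
  shows "sharp s - sharp t \<in> local_group (beach A A0 B) F (restr x F)"
proof -
  obtain a0 where a0: "a0 \<in> A0" using A0(2) by blast
  let ?G = "local_group (beach A A0 B) F (restr x F)"
  have same_snd: "beach_adj A0 u (a0, snd u)" for u by (simp add: beach_adj_def)
  have both_A0: "beach_adj A0 (a0, b) (a0, b')" for b b' using a0 by (simp add: beach_adj_def)
  have moved: "(a0, snd u) \<in> A \<times> B" if "u \<in> A \<times> B" for u using that a0 A0(1) by auto
  have b: "snd s \<in> B" "snd t \<in> B" using s t by auto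
  note planted = sharp_diff_planted_in_local_group[OF F x A0(1) a0]
  have "sharp s - sharp (a0, snd s) \<in> ?G"
    by (rule planted[OF b(1) s same_snd moved[OF s] both_A0])
  moreover have "sharp (a0, snd s) - sharp (a0, snd t) \<in> ?G"
    by (rule planted[OF b(1) moved[OF s] both_A0 moved[OF t] both_A0])
  moreover have "sharp (a0, snd t) - sharp t \<in> ?G"
    by (rule planted[OF b(2) moved[OF t] both_A0 t same_snd])
  ultimately have "(sharp s - sharp (a0, snd s)) + (sharp (a0, snd s) - sharp (a0, snd t))
      + (sharp (a0, snd t) - sharp t) \<in> ?G"
    unfolding local_group_def by (intro group_closure_add)
  then show ?thesis by simp
qed

theorem proposition3p3:
  fixes A A0 :: "'a set" and B :: "'b set"
  assumes "finite A" and "finite B" and "A0 \<subseteq> A" and "A0 \<noteq> {}"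
  shows "\<exists>F :: ('d::finite \<Rightarrow> int) set. finite F \<and>
     (\<forall>a \<in> patterns (beach A A0 B :: (('d \<Rightarrow> int) \<Rightarrow> 'a \<times> 'b) set) F.
        group_closure {Psi_pat F a b | b. b \<in> patterns (beach A A0 B) F \<and> (\<forall>n \<in> bdry F. a n = b n)}
        = H_group (beach A A0 B :: (('d \<Rightarrow> int) \<Rightarrow> 'a \<times> 'b) set))"
proof -
  let ?X = "beach A A0 B :: (('d \<Rightarrow> int) \<Rightarrow> 'a \<times> 'b) set"
  define F :: "('d \<Rightarrow> int) set" where "F = {k. supnorm k \<le> 3}"
  have F: "finite F" "{k. supnorm k \<le> 2} \<subseteq> interior_set F"
    unfolding F_def using finite_supnorm_le interior_supnorm_ball[where r = 2] by auto
  show ?thesis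
  proof (intro exI[of _ F] conjI ballI, fold local_group_def)
    fix a assume "a \<in> patterns ?X F"
    then obtain x where x: "x \<in> ?X" and a: "a = restr x F" by (auto simp: patterns_def)
    have "H_group ?X \<subseteq> group_closure {sharp s - sharp t |s t. s \<in> A \<times> B \<and> t \<in> A \<times> B}"
      by (rule H_group_subset_sharp_diffs) (simp add: mem_beach_iff)
    also have "\<dots> \<subseteq> local_group ?X F a"
      using sharp_diff_in_local_group[OF F x assms(3,4)] unfolding a local_group_def
      by (intro group_closure_minimal) (auto intro: group_closure.base)
    finally show "local_group ?X F a = H_group ?X"
      using local_group_subset_H_group[OF F(1) x] a by blast
  qed (rule F(1))
qed

end
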